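(* For every positive integer $k$, $$M_{0^k}=\frac{\prod_{i=0}^{k-1}(M_0-i)}{k!}=\frac{(-1)^k}{k!}\prod_{i=1}^k\Big(t+i-\frac12\Big),$$ where $0^k=(0,\dots,0)$ has $k$ entries.
   Context: $\mathbb P$ denotes the positive integers. For $\beta\in\mathbb P^k$, $\phi\binom{0^k}{\beta}\in\mathbb Q[t][z^{-1},z]]$ is the Laurent expansion in $z$ (coefficients in $\mathbb Q[t]$) of the absolutely convergent series $\sum_{0<i_1<\cdots<i_k}e^{(i_1+t)\beta_1z}\cdots e^{(i_k+t)\beta_kz}$, for $t\ge0$ and $\mathrm{Re}(z)<0$. Let $P$ be the polar-part projection, $P(\sum_{n\ge m}a_nz^n)=\sum_{n<0}a_nz^n$. Set $\phi_-(\emptyset)=1$. For $k\ge1$ let $$E=\phi\tbinom{0^k}{\beta}+\sum_{i=1}^{k-1}\phi\tbinom{0^i}{\beta_1..\beta_i}\phi_-\tbinom{0^{k-i}}{\beta_{i+1}..\beta_k}.$$ Then $\phi_-\binom{0^k}{\beta}=-P(E)$, $\phi_+\binom{0^k}{\beta}=(\mathrm{id}-P)(E)$, and $Z\binom{0^k}{\beta}=\phi_+\binom{0^k}{\beta}|_{z=0}\in\mathbb Q[t]$. The renormalized monomial quasisymmetric function is $M_{0^k}:=Z\binom{0^k}{\delta,\dots,\delta}$ for $\delta\in\mathbb P$; this does not depend on $\delta$. Here $M_0$ means $M_{0^1}$. *)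

theory Defs
  imports "HOL-Analysis.Analysis" "HOL-Computational_Algebra.Formal_Laurent_Series"
begin

text \<open>Index tuples 0 < i_1 < ... < i_k, represented as strictly increasing lists of length k.\<close>
definition idx_tuples :: "nat \<Rightarrow> nat list set" where
  "idx_tuples k = {is. length is = k \<and> sorted_wrt (<) is \<and> (\<forall>x\<in>set is. 0 < x)}"

text \<open>The function sum_{0<i_1<...<i_k} prod_j exp((i_j+t) beta_j z), for fixed real t,
  as a function of complex z (absolutely convergent for t \<ge> 0, Re z < 0).\<close>
definition phi_fun :: "real \<Rightarrow> nat list \<Rightarrow> complex \<Rightarrow> complex" where
  "phi_fun t \<beta> z = (\<Sum>\<^sub>\<infinity> is \<in> idx_tuples (length \<beta>).
      \<Prod>j<length \<beta>. exp (complex_of_real (real (is ! j) + t) * of_nat (\<beta> ! j) * z))"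

text \<open>F is the Laurent expansion (at z = 0) of f on the region Re z < 0.\<close>
definition is_laurent_exp :: "complex fls \<Rightarrow> (complex \<Rightarrow> complex) \<Rightarrow> bool" where
  "is_laurent_exp F f \<longleftrightarrow> (\<exists>r>0. \<forall>z. 0 < norm z \<and> norm z < r \<and> Re z < 0 \<longrightarrow>
      (\<lambda>n::nat. fls_nth F (fls_subdegree F + int n) * z powi (fls_subdegree F + int n)) sums f z)"

definition phi :: "real \<Rightarrow> nat list \<Rightarrow> complex fls" where
  "phi t \<beta> = (THE F. is_laurent_exp F (phi_fun t \<beta>))"

definition polar :: "complex fls \<Rightarrow> complex fls" where
  "polar F = F - fps_to_fls (fls_regpart F)"

function phi_minus :: "real \<Rightarrow> nat list \<Rightarrow> complex fls" where
  "phi_minus t \<beta> = (if \<beta> = [] then 1 else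
     - polar (phi t \<beta> + (\<Sum>i\<in>{1..<length \<beta>}. phi t (take i \<beta>) * phi_minus t (drop i \<beta>))))"
  by auto
termination
  by (relation "Wellfounded.measure (\<lambda>(t, \<beta>). length \<beta>)") auto

definition E_series :: "real \<Rightarrow> nat list \<Rightarrow> complex fls" where
  "E_series t \<beta> = phi t \<beta> + (\<Sum>i\<in>{1..<length \<beta>}. phi t (take i \<beta>) * phi_minus t (drop i \<beta>))"

definition phi_plus :: "real \<Rightarrow> nat list \<Rightarrow> complex fls" where
  "phi_plus t \<beta> = E_series t \<beta> - polar (E_series t \<beta>)"

definition Zren :: "real \<Rightarrow> nat list \<Rightarrow> complex" where
  "Zren t \<beta> = fls_nth (phi_plus t \<beta>) 0"

text \<open>Renormalized M_{0^k} at t, computed with the letter delta.\<close>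
definition M0k :: "nat \<Rightarrow> nat \<Rightarrow> real \<Rightarrow> complex" where
  "M0k \<delta> k t = Zren t (replicate k \<delta>)"

end

theory Submission
  imports Defs "HOL-Complex_Analysis.Complex_Analysis"
begin

text \<open>
  For \<open>\<beta> = (\<delta>, ..., \<delta>)\<close> the series \<open>phi\<close> is a product of geometric series: with \<open>q = exp(\<delta> z)\<close>
  and \<open>u = exp(t \<delta> z)\<close> one gets \<open>phi(0^k; \<delta>^k) = (\<Prod>j=1..k. u q^j / (1 - q^j))\<close>, the k-th
  elementary symmetric function \<open>e_k\<close> of the alphabet \<open>u q, u q^2, ...\<close>. By Newton's identities,
  \<open>G(X) = \<Sum>k. e_k X^k\<close> satisfies \<open>G' = G H\<close> with \<open>H = \<Sum>n. (-1)^n p_(n+1) X^n\<close>, and the power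
  sums \<open>p_n = u^n q^n / (1 - q^n)\<close> have at most a simple pole at \<open>z = 0\<close> and constant term
  \<open>s = -(t + 1/2)\<close>. Integrating the polar and the regular part of \<open>H\<close> separately gives the
  Birkhoff factorisation \<open>G \<Phi>_- = \<Phi>_+\<close>, where the coefficients of \<open>\<Phi>_-\<close> are purely polar and
  those of \<open>\<Phi>_+\<close> are regular; the recursion defining \<open>phi_-\<close> and \<open>phi_+\<close> is the
  coefficientwise form of this factorisation. At \<open>z = 0\<close> the equation \<open>\<Phi>_+' = \<Phi>_+ H_reg\<close>
  becomes \<open>C' = C s / (1 + X)\<close>, so \<open>C = (1 + X)^s\<close> and \<open>M_(0^k) = s gchoose k\<close>.
\<close>

section \<open>Strictly increasing index tuples\<close>

lemma has_sum_mult_product: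
  fixes f :: "'i \<Rightarrow> 'a::{real_normed_field, banach}" and g :: "'j \<Rightarrow> 'a"
  assumes f: "(f has_sum S) A" and g: "(g has_sum T) B"
    and f_abs: "(\<lambda>x. norm (f x)) summable_on A" and g_abs: "(\<lambda>y. norm (g y)) summable_on B"
  shows "((\<lambda>(x, y). f x * g y) has_sum (S * T)) (A \<times> B)"
proof (rule has_sum_SigmaI)
  show "((\<lambda>y. case (x, y) of (x, y) \<Rightarrow> f x * g y) has_sum f x * T) B" for x
    using has_sum_cmult_right[OF g] by simp
  show "((\<lambda>x. f x * T) has_sum S * T) A"
    by (rule has_sum_cmult_left[OF f])
  define C where "C = (\<Sum>\<^sub>\<infinity>y\<in>B. norm (g y))"
  have "C \<ge> 0"
    unfolding C_def by (intro infsum_nonneg) auto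
  have "(\<lambda>p. norm (case p of (x, y) \<Rightarrow> f x * g y)) summable_on A \<times> B"
  proof (subst Infinite_Sum.abs_summable_on_Sigma_iff, intro conjI ballI)
    show "(\<lambda>y. norm (case (x, y) of (x, y) \<Rightarrow> f x * g y)) summable_on B" for x
      using summable_on_cmult_right[OF g_abs, of "norm (f x)"] by (simp add: norm_mult)
    have "norm (\<Sum>\<^sub>\<infinity>y\<in>B. norm (case (x, y) of (x, y) \<Rightarrow> f x * g y)) = C * norm (f x)" for x
      using \<open>C \<ge> 0\<close> by (simp add: norm_mult infsum_cmult_right' C_def)
    then show "(\<lambda>x. norm (\<Sum>\<^sub>\<infinity>y\<in>B. norm (case (x, y) of (x, y) \<Rightarrow> f x * g y))) summable_on A"
      using summable_on_cmult_right[OF f_abs, of C] by simp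
  qed
  then show "(\<lambda>(x, y). f x * g y) summable_on A \<times> B"
    by (rule abs_summable_summable)
qed

definition shift_cons :: "nat \<times> nat list \<Rightarrow> nat list" where
  "shift_cons p = fst p # map (\<lambda>i. i + fst p) (snd p)"

lemma inj_shift_cons: "inj shift_cons"
  by (auto simp: inj_def shift_cons_def inj_map_eq_map[of "\<lambda>i. i + _", OF inj_onI] prod_eq_iff)

lemma sum_list_shift_cons: "sum_list (shift_cons (a, is)) = Suc (length is) * a + sum_list is"
  by (induction "is") (auto simp: shift_cons_def)

lemma idx_tuples_0: "idx_tuples 0 = {[]}"
  by (auto simp: idx_tuples_def)

lemma idx_tuples_Suc: "idx_tuples (Suc k) = shift_cons ` ({1..} \<times> idx_tuples k)"
proof
  show "shift_cons ` ({1..} \<times> idx_tuples k) \<subseteq> idx_tuples (Suc k)"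
    by (auto simp: shift_cons_def idx_tuples_def sorted_wrt_map)
  show "idx_tuples (Suc k) \<subseteq> shift_cons ` ({1..} \<times> idx_tuples k)"
  proof
    fix xs assume "xs \<in> idx_tuples (Suc k)"
    then obtain a ys where xs: "xs = a # ys" and a: "a \<ge> 1" and ys: "length ys = k"
       "sorted_wrt (<) ys" "\<forall>y\<in>set ys. a < y"
      by (cases xs) (auto simp: idx_tuples_def)
    define zs where "zs = map (\<lambda>i. i - a) ys"
    have "zs \<in> idx_tuples k"
      using ys by (auto simp: zs_def idx_tuples_def sorted_wrt_map intro!: sorted_wrt_mono_rel[of ys "(<)"])
    moreover have "map (\<lambda>i. i + a) zs = ys"
      using ys(3) by (auto simp: zs_def intro!: map_idI)
    ultimately show "xs \<in> shift_cons ` ({1..} \<times> idx_tuples k)"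
      using a xs by (auto simp: shift_cons_def image_iff intro!: bexI[of _ "(a, zs)"])
  qed
qed

lemma has_sum_power_sum_list_idx_tuples:
  fixes q :: complex
  assumes "norm q < 1"
  shows "((\<lambda>is. q ^ sum_list is) has_sum (\<Prod>j\<in>{1..k}. q ^ j / (1 - q ^ j))) (idx_tuples k)"
  using assms
proof (induction k arbitrary: q)
  case 0
  then show ?case by (auto simp: idx_tuples_0 intro: has_sum_finiteI)
next
  case (Suc k)
  define z where "z = q ^ Suc k"
  define T where "T = (\<Prod>j\<in>{1..k}. q ^ j / (1 - q ^ j))"
  have z: "norm z < 1"
    using Suc.prems by (simp add: z_def norm_power power_less_one_iff del: power_Suc)
  have tuples: "((\<lambda>is. q ^ sum_list is) has_sum T) (idx_tuples k)"
    using Suc by (simp add: T_def)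
  \<comment> \<open>absolute summability comes from the same statement at \<open>norm q\<close>\<close>
  have "(\<lambda>is. complex_of_real (norm q) ^ sum_list is) summable_on idx_tuples k"
    using Suc.IH[of "complex_of_real (norm q)"] Suc.prems by (auto dest: has_sum_imp_summable)
  then have tuples_abs: "(\<lambda>is. norm (q ^ sum_list is)) summable_on idx_tuples k"
    by (simp add: summable_on_iff_abs_summable_on_complex norm_power)
  have geom_abs: "(\<lambda>a. norm (z ^ a)) summable_on {1..}"
    using has_sum_geometric_from_1[of "norm z"] z by (auto simp: norm_power dest: has_sum_imp_summable)
  have "((\<lambda>(a, is). z ^ a * q ^ sum_list is) has_sum (z / (1 - z) * T)) ({1..} \<times> idx_tuples k)"
    by (rule has_sum_mult_product[OF has_sum_geometric_from_1[OF z] tuples geom_abs tuples_abs])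
  also have "?this \<longleftrightarrow> (((\<lambda>is. q ^ sum_list is) \<circ> shift_cons) has_sum (z / (1 - z) * T)) ({1..} \<times> idx_tuples k)"
    by (intro has_sum_cong)
      (auto simp: z_def sum_list_shift_cons power_add power_mult power_mult_distrib idx_tuples_def)
  also have "z / (1 - z) * T = (\<Prod>j\<in>{1..Suc k}. q ^ j / (1 - q ^ j))"
    by (simp add: T_def z_def prod.nat_ivl_Suc')
  finally show ?case
    unfolding idx_tuples_Suc by (subst has_sum_reindex) (auto simp: o_def intro: inj_on_subset[OF inj_shift_cons])
qed

lemma phi_fun_replicate:
  assumes "Re z < 0" and "\<delta> \<ge> 1"
  shows "phi_fun t (replicate k \<delta>) z =
    (\<Prod>j\<in>{1..k}. exp (of_real t * of_nat \<delta> * z) * exp (of_nat \<delta> * z) ^ j / (1 - exp (of_nat \<delta> * z) ^ j))"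
proof -
  define q where "q = exp (of_nat \<delta> * z)"
  define u where "u = exp (of_real t * of_nat \<delta> * z)"
  have q: "norm q < 1"
    using assms by (simp add: q_def mult_pos_neg)
  have exp_shift: "exp (complex_of_real (real i + t) * of_nat \<delta> * z) = u * q ^ i" for i
  proof -
    have "complex_of_real (real i + t) * of_nat \<delta> * z = of_real t * of_nat \<delta> * z + of_nat i * (of_nat \<delta> * z)"
      by (simp add: algebra_simps)
    then show ?thesis
      by (simp add: u_def q_def exp_add exp_of_nat_mult)
  qed
  have summand: "(\<Prod>j<length (replicate k \<delta>). exp (complex_of_real (real (xs ! j) + t) * of_nat (replicate k \<delta> ! j) * z))
      = u ^ k * q ^ sum_list xs" if "xs \<in> idx_tuples k" for xs
  proof -
    have "(\<Prod>j<length (replicate k \<delta>). exp (complex_of_real (real (xs ! j) + t) * of_nat (replicate k \<delta> ! j) * z))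
        = (\<Prod>j<k. u * q ^ (xs ! j))"
      unfolding length_replicate by (intro prod.cong refl) (simp only: lessThan_iff nth_replicate exp_shift)
    also have "\<dots> = u ^ k * q ^ (\<Sum>j<k. xs ! j)"
      by (simp add: prod.distrib power_sum)
    also have "(\<Sum>j<k. xs ! j) = sum_list xs"
      using that by (simp add: idx_tuples_def sum_list_sum_nth atLeast0LessThan)
    finally show ?thesis .
  qed
  have "((\<lambda>is. u ^ k * q ^ sum_list is) has_sum (u ^ k * (\<Prod>j\<in>{1..k}. q ^ j / (1 - q ^ j)))) (idx_tuples k)"
    by (intro has_sum_cmult_right has_sum_power_sum_list_idx_tuples q)
  then have "phi_fun t (replicate k \<delta>) z = u ^ k * (\<Prod>j\<in>{1..k}. q ^ j / (1 - q ^ j))"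
    unfolding phi_fun_def length_replicate by (subst infsum_cong[OF summand[unfolded length_replicate]]) (auto intro: infsumI)
  also have "\<dots> = (\<Prod>j\<in>{1..k}. u * q ^ j / (1 - q ^ j))"
    by (simp only: times_divide_eq_right[symmetric] prod.distrib) simp
  finally show ?thesis
    by (simp only: u_def q_def)
qed

section \<open>Laurent expansions\<close>

lemma is_laurent_exp_if_has_laurent_expansion:
  assumes g: "g has_laurent_expansion F" and f_eq_g: "\<And>z. Re z < 0 \<Longrightarrow> f z = g z"
  shows "is_laurent_exp F f"
proof -
  from g have R: "fls_conv_radius F > 0" and ev: "eventually (\<lambda>z. eval_fls F z = g z) (at 0)"
    by (auto simp: has_laurent_expansion_def)
  obtain r where r: "0 < r" "ereal r < fls_conv_radius F"
    using ereal_dense2[OF R] by (auto simp: zero_ereal_def)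
  from ev obtain d where d: "d > 0" "\<And>z. z \<noteq> 0 \<Longrightarrow> dist z 0 < d \<Longrightarrow> eval_fls F z = g z"
    unfolding eventually_at by auto
  show ?thesis unfolding is_laurent_exp_def
  proof (intro exI[of _ "min d r"] conjI allI impI)
    show "0 < min d r"
      using d r by simp
    fix z :: complex assume z: "0 < norm z \<and> norm z < min d r \<and> Re z < 0"
    then have "ereal (norm z) < ereal r"
      by simp
    also note r(2)
    finally have "(\<lambda>n. fls_nth F (int n + fls_subdegree F) * z powi (int n + fls_subdegree F)) sums eval_fls F z"
      using z by (intro sums_eval_fls) auto
    also have "eval_fls F z = f z"
      using z d f_eq_g[of z] by auto
    finally show "(\<lambda>n. fls_nth F (fls_subdegree F + int n) * z powi (fls_subdegree F + int n)) sums f z"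
      by (simp add: add.commute)
  qed
qed

lemma fls_conv_radius_ge_if_summable:
  fixes F :: "complex fls"
  assumes z: "z \<noteq> 0"
    and summable: "summable (\<lambda>n. fls_nth F (fls_subdegree F + int n) * z powi (fls_subdegree F + int n))"
  shows "ereal (norm z) \<le> fls_conv_radius F"
proof -
  have "(\<lambda>n. fls_nth F (fls_subdegree F + int n) * z powi (fls_subdegree F + int n))
      = (\<lambda>n. z powi fls_subdegree F * (fps_nth (fls_base_factor_to_fps F) n * z ^ n))"
    using z by (simp add: power_int_add fls_base_factor_to_fps_nth add.commute mult_ac)
  then have "summable (\<lambda>n. fps_nth (fls_base_factor_to_fps F) n * z ^ n)"
    using summable z by simp
  then have "norm z \<le> conv_radius (fps_nth (fls_base_factor_to_fps F))"
    by (rule conv_radius_geI)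
  then show ?thesis
    by (simp add: fls_conv_radius_altdef fps_conv_radius_def)
qed

lemma is_laurent_exp_imp_eval_fls:
  assumes "is_laurent_exp F f"
  obtains r where "r > 0" "ereal r \<le> fls_conv_radius F"
    "\<And>z. 0 < norm z \<Longrightarrow> norm z < r \<Longrightarrow> Re z < 0 \<Longrightarrow> eval_fls F z = f z"
proof -
  from assms obtain r where r: "r > 0" and sums: "\<And>z. 0 < norm z \<and> norm z < r \<and> Re z < 0 \<Longrightarrow>
      (\<lambda>n. fls_nth F (fls_subdegree F + int n) * z powi (fls_subdegree F + int n)) sums f z"
    unfolding is_laurent_exp_def by blast
  have radius: "ereal (r / 2) \<le> fls_conv_radius F"
    using fls_conv_radius_ge_if_summable[of "- of_real (r / 2)" F] sums[of "- of_real (r / 2)"] r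
    by (auto simp: sums_iff)
  show ?thesis
  proof (rule that[OF _ radius])
    show "0 < r / 2"
      using r by simp
    fix z :: complex assume z: "0 < norm z" "norm z < r / 2" "Re z < 0"
    then have "ereal (norm z) < ereal (r / 2)"
      by simp
    also note radius
    finally have "(\<lambda>n. fls_nth F (int n + fls_subdegree F) * z powi (int n + fls_subdegree F)) sums eval_fls F z"
      using z by (intro sums_eval_fls) auto
    moreover have "(\<lambda>n. fls_nth F (int n + fls_subdegree F) * z powi (int n + fls_subdegree F)) sums f z"
      using sums[of z] z by (simp add: add.commute)
    ultimately show "eval_fls F z = f z"
      by (rule sums_unique2)
  qed
qed

lemma fls_eq_0_if_eval_fls_left_half_disc:
  fixes F :: "complex fls"
  assumes r: "0 < r" "ereal r \<le> fls_conv_radius F"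
    and zero: "\<And>z. 0 < norm z \<Longrightarrow> norm z < r \<Longrightarrow> Re z < 0 \<Longrightarrow> eval_fls F z = 0"
  shows "F = 0"
proof -
  have "ereal 0 < ereal r"
    using r by simp
  also note r(2)
  finally have "(\<lambda>w. eval_fls F (0 + w)) has_laurent_expansion F"
    by (simp add: eval_fls_has_laurent_expansion zero_ereal_def)
  moreover have "frequently (\<lambda>z. eval_fls F z = 0) (at 0)"
    unfolding frequently_at
  proof (intro allI impI)
    fix d :: real assume "d > 0"
    define z where "z = - complex_of_real (min d r / 2)"
    have "z \<noteq> 0" "dist z 0 < d" "0 < norm z" "norm z < r" "Re z < 0"
      using \<open>d > 0\<close> r by (auto simp: z_def)
    then show "\<exists>z\<in>UNIV. z \<noteq> 0 \<and> dist z 0 < d \<and> eval_fls F z = 0"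
      using zero by blast
  qed
  ultimately show "F = 0"
    using has_laurent_expansion_frequently_zero_iff by fastforce
qed

lemma is_laurent_exp_unique:
  assumes "is_laurent_exp F f" and "is_laurent_exp G f"
  shows "F = G"
proof -
  obtain r1 where r1: "r1 > 0" "ereal r1 \<le> fls_conv_radius F"
    "\<And>z. 0 < norm z \<Longrightarrow> norm z < r1 \<Longrightarrow> Re z < 0 \<Longrightarrow> eval_fls F z = f z"
    using is_laurent_exp_imp_eval_fls[OF assms(1)] by blast
  obtain r2 where r2: "r2 > 0" "ereal r2 \<le> fls_conv_radius G"
    "\<And>z. 0 < norm z \<Longrightarrow> norm z < r2 \<Longrightarrow> Re z < 0 \<Longrightarrow> eval_fls G z = f z"
    using is_laurent_exp_imp_eval_fls[OF assms(2)] by blast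
  define r where "r = min r1 r2"
  have "ereal r \<le> ereal r1" "ereal r \<le> ereal r2"
    by (simp_all add: r_def)
  then have radius_F: "ereal r \<le> fls_conv_radius F" and radius_G: "ereal r \<le> fls_conv_radius G"
    using r1(2) r2(2) by (blast intro: order_trans)+
  have "F - G = 0"
  proof (rule fls_eq_0_if_eval_fls_left_half_disc)
    show "0 < r"
      using r1 r2 by (simp add: r_def)
    have "ereal r \<le> min (fls_conv_radius F) (fls_conv_radius G)"
      using radius_F radius_G by simp
    also have "\<dots> \<le> fls_conv_radius (F - G)"
      by (rule fls_conv_radius_diff)
    finally show "ereal r \<le> fls_conv_radius (F - G)" .
    fix z :: complex assume z: "0 < norm z" "norm z < r" "Re z < 0"
    then have "ereal (norm z) < ereal r"
      by simp
    then have "ereal (norm z) < fls_conv_radius F" "ereal (norm z) < fls_conv_radius G"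
      using radius_F radius_G by (blast intro: less_le_trans)+
    then have "eval_fls (F - G) z = eval_fls F z - eval_fls G z"
      using z by (intro eval_fls_diff) auto
    also have "\<dots> = 0"
      using z r1 r2 by (simp add: r_def)
    finally show "eval_fls (F - G) z = 0" .
  qed
  then show "F = G"
    by simp
qed

lemma phi_eqI:
  assumes "g has_laurent_expansion F" and "\<And>z. Re z < 0 \<Longrightarrow> phi_fun t \<beta> z = g z"
  shows "phi t \<beta> = F"
  unfolding phi_def
  using is_laurent_exp_if_has_laurent_expansion[OF assms] is_laurent_exp_unique by blast

definition exp_fls :: "complex \<Rightarrow> complex fls" where
  "exp_fls c = fps_to_fls (fps_exp c)"

lemma has_laurent_expansion_exp_fls [laurent_expansion_intros]:
  "(\<lambda>z. exp (c * z)) has_laurent_expansion exp_fls c"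
  using has_fps_expansion_exp[of c] by (simp add: exp_fls_def has_fps_expansion_to_laurent)

lemma exp_fls_power: "exp_fls c ^ n = exp_fls (of_nat n * c)"
  by (simp add: exp_fls_def fps_exp_power_mult flip: fps_to_fls_power)

lemma exp_fls_add: "exp_fls (b + c) = exp_fls b * exp_fls c"
  by (simp add: exp_fls_def fps_exp_add_mult fls_times_fps_to_fls)

lemma fls_nth_exp_fls_1: "fls_nth (exp_fls c) 1 = c"
  by (simp add: exp_fls_def)

lemma fps_nth_1_mult_inverse:
  fixes E D :: "'a::field fps"
  assumes "fps_nth D 0 \<noteq> 0"
  shows "fps_nth (E * inverse D) 1 = (fps_nth E 1 * fps_nth D 0 - fps_nth E 0 * fps_nth D 1) / fps_nth D 0 ^ 2"
proof -
  define F where "F = E * inverse D"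
  have "D * F = E"
    using assms by (simp add: F_def mult.left_commute inverse_mult_eq_1 mult.commute[of D])
  then have nth_0: "fps_nth D 0 * fps_nth F 0 = fps_nth E 0"
    and nth_1: "fps_nth D 0 * fps_nth F 1 + fps_nth D 1 * fps_nth F 0 = fps_nth E 1"
    by (auto simp: fps_mult_nth)
  have F0: "fps_nth F 0 = fps_nth E 0 / fps_nth D 0"
    using nth_0 assms by (simp add: field_simps)
  have "fps_nth F 1 = (fps_nth E 1 - fps_nth D 1 * fps_nth F 0) / fps_nth D 0"
    using nth_1 assms by (simp add: field_simps)
  then show ?thesis
    using assms unfolding F_def[symmetric] F0 by (simp add: field_simps power2_eq_square)
qed

lemma fps_to_fls_div_fls_X_mult:
  fixes E D :: "'a::field fps"
  assumes "fps_nth D 0 \<noteq> 0"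
  shows "fps_to_fls E / (fls_X * fps_to_fls D) = fls_shift 1 (fps_to_fls (E * inverse D))"
proof -
  have "D \<noteq> 0"
    using assms by auto
  have "fls_shift 1 (fps_to_fls (E * inverse D)) * (fls_X * fps_to_fls D) = fps_to_fls (E * inverse D * D)"
    by (simp add: fls_shifted_times_simps fls_X_times_conv_shift mult_ac fls_times_fps_to_fls)
  also have "\<dots> = fps_to_fls E"
    using assms by (simp add: mult.assoc inverse_mult_eq_1)
  finally show ?thesis
    using \<open>D \<noteq> 0\<close> by (simp add: field_simps)
qed

lemma one_minus_fps_exp:
  fixes c :: "'a::field_char_0"
  shows "1 - fps_exp c = fps_X * Abs_fps (\<lambda>k. - (c ^ Suc k / fact (Suc k)))"
proof (rule fps_ext)
  show "fps_nth (1 - fps_exp c) n = fps_nth (fps_X * Abs_fps (\<lambda>k. - (c ^ Suc k / fact (Suc k)))) n" for n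
    by (cases n) (auto simp del: fact_Suc)
qed

lemma fls_nth_exp_fls_div_one_minus_exp_fls:
  fixes b c :: complex
  assumes "c \<noteq> 0"
  shows "m < -1 \<Longrightarrow> fls_nth (exp_fls b / (1 - exp_fls c)) m = 0"
    and "fls_nth (exp_fls b / (1 - exp_fls c)) 0 = 1/2 - b/c"
proof -
  define D where "D = Abs_fps (\<lambda>k. - (c ^ Suc k / fact (Suc k)))"
  have D0: "fps_nth D 0 \<noteq> 0"
    using assms by (simp add: D_def)
  have "1 - exp_fls c = fps_to_fls (1 - fps_exp c)"
    by (simp add: exp_fls_def)
  then have "exp_fls b / (1 - exp_fls c) = fps_to_fls (fps_exp b) / (fls_X * fps_to_fls D)"
    by (simp add: exp_fls_def one_minus_fps_exp D_def fls_times_fps_to_fls)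
  also have "\<dots> = fls_shift 1 (fps_to_fls (fps_exp b * inverse D))"
    by (rule fps_to_fls_div_fls_X_mult[OF D0])
  finally have quotient: "exp_fls b / (1 - exp_fls c) = fls_shift 1 (fps_to_fls (fps_exp b * inverse D))" .
  show "m < -1 \<Longrightarrow> fls_nth (exp_fls b / (1 - exp_fls c)) m = 0"
    by (simp add: quotient)
  have "fps_nth (fps_exp b * inverse D) 1
      = (fps_nth (fps_exp b) 1 * fps_nth D 0 - fps_nth (fps_exp b) 0 * fps_nth D 1) / fps_nth D 0 ^ 2"
    by (rule fps_nth_1_mult_inverse[OF D0])
  also have "\<dots> = 1/2 - b/c"
    using assms by (simp add: D_def field_simps power2_eq_square)
  finally show "fls_nth (exp_fls b / (1 - exp_fls c)) 0 = 1/2 - b/c"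
    by (simp add: quotient)
qed

section \<open>Newton's identity for a geometric alphabet\<close>

text \<open>\<open>esym k\<close> and \<open>psum n\<close> are the elementary symmetric functions and the power sums of the
  infinite alphabet \<open>u q, u q\<^sup>2, u q\<^sup>3, \<dots>\<close> (summed as geometric series).\<close>

locale geometric_alphabet =
  fixes q u :: "'a::field"
  assumes power_ne_1: "\<And>m. m \<ge> 1 \<Longrightarrow> q ^ m \<noteq> 1"
begin

definition esym :: "nat \<Rightarrow> 'a" where
  "esym k = (\<Prod>j\<in>{1..k}. u * q ^ j / (1 - q ^ j))"

definition psum :: "nat \<Rightarrow> 'a" where
  "psum n = u ^ n * q ^ n / (1 - q ^ n)"

lemma esym_0 [simp]: "esym 0 = 1"
  by (simp add: esym_def)

lemma esym_Suc: "esym (Suc k) * (1 - q ^ Suc k) = u * q ^ Suc k * esym k"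
proof -
  have "1 - q ^ Suc k \<noteq> 0"
    using power_ne_1[of "Suc k"] by simp
  then show ?thesis
    by (simp add: esym_def prod.nat_ivl_Suc' field_simps)
qed

lemma psum_mult: "n \<ge> 1 \<Longrightarrow> psum n * (1 - q ^ n) = (u * q) ^ n"
  using power_ne_1[of n] by (simp add: psum_def field_simps)

lemma psum_mult_split:
  assumes "n \<le> K"
  shows "psum (n + 1) * (1 - q ^ (K + 1)) = (u * q) ^ (n + 1) + q ^ (n + 1) * psum (n + 1) * (1 - q ^ (K - n))"
proof -
  have pow: "q ^ (K + 1) = q ^ (n + 1) * q ^ (K - n)"
    using assms by (simp flip: power_add)
  have "psum (n + 1) * (1 - q ^ (K + 1))
      = psum (n + 1) * (1 - q ^ (n + 1)) + q ^ (n + 1) * psum (n + 1) * (1 - q ^ (K - n))"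
    unfolding pow by (simp add: algebra_simps)
  also have "psum (n + 1) * (1 - q ^ (n + 1)) = (u * q) ^ (n + 1)"
    by (rule psum_mult) simp
  finally show ?thesis .
qed

lemma alternating_sum_esym: "(\<Sum>n\<le>k. (-1) ^ n * (u * q) ^ (n + 1) * esym (k - n)) = u * q ^ (k + 1) * esym k"
proof (induction k)
  case 0
  then show ?case by simp
next
  case (Suc k)
  have "(\<Sum>n\<le>Suc k. (-1) ^ n * (u * q) ^ (n + 1) * esym (Suc k - n))
      = u * q * esym (Suc k) - u * q * (\<Sum>n\<le>k. (-1) ^ n * (u * q) ^ (n + 1) * esym (k - n))"
    by (subst sum.atMost_Suc_shift) (simp add: sum_distrib_left sum_negf mult_ac)
  also have "\<dots> = u * q * esym (Suc k) - u * q * (u * q ^ Suc k * esym k)"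
    by (simp only: Suc.IH Suc_eq_plus1)
  also have "u * q ^ Suc k * esym k = esym (Suc k) * (1 - q ^ Suc k)"
    by (simp only: esym_Suc)
  finally show ?case
    by (simp add: algebra_simps)
qed

lemma newton_tail_sum:
  "(\<Sum>n\<le>Suc k. (-1) ^ n * q ^ (n + 1) * psum (n + 1) * ((1 - q ^ (Suc k - n)) * esym (Suc k - n)))
    = u * q ^ (k + 2) * (\<Sum>n\<le>k. (-1) ^ n * psum (n + 1) * esym (k - n))"
proof -
  have summand: "(-1) ^ n * q ^ (n + 1) * psum (n + 1) * ((1 - q ^ (Suc k - n)) * esym (Suc k - n))
      = u * q ^ (k + 2) * ((-1) ^ n * psum (n + 1) * esym (k - n))" if "n \<le> k" for n
  proof -
    have esym_eq: "(1 - q ^ (Suc k - n)) * esym (Suc k - n) = u * q ^ Suc (k - n) * esym (k - n)"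
      using esym_Suc[of "k - n"] that by (simp add: Suc_diff_le mult.commute)
    have "n + 1 + Suc (k - n) = k + 2"
      using that by simp
    then have pow: "q ^ (n + 1) * q ^ Suc (k - n) = q ^ (k + 2)"
      by (simp only: power_add[symmetric])
    show ?thesis
      unfolding esym_eq pow[symmetric] by (simp only: mult_ac)
  qed
  have "(\<Sum>n\<le>Suc k. (-1) ^ n * q ^ (n + 1) * psum (n + 1) * ((1 - q ^ (Suc k - n)) * esym (Suc k - n)))
      = (\<Sum>n\<le>k. (-1) ^ n * q ^ (n + 1) * psum (n + 1) * ((1 - q ^ (Suc k - n)) * esym (Suc k - n)))"
    by simp
  also have "\<dots> = (\<Sum>n\<le>k. u * q ^ (k + 2) * ((-1) ^ n * psum (n + 1) * esym (k - n)))"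
    by (intro sum.cong refl) (simp only: atMost_iff summand)
  finally show ?thesis
    by (simp only: sum_distrib_left)
qed

theorem newton_identity: "of_nat (Suc k) * esym (Suc k) = (\<Sum>n\<le>k. (-1) ^ n * psum (n + 1) * esym (k - n))"
proof (induction k)
  case 0
  then show ?case
    by (simp add: esym_def psum_def)
next
  case (Suc k)
  define K where "K = Suc k"
  have nonzero: "1 - q ^ (K + 1) \<noteq> 0"
    using power_ne_1[of "K + 1"] by simp
  have "(\<Sum>n\<le>K. (-1) ^ n * psum (n + 1) * esym (K - n)) * (1 - q ^ (K + 1))
      = (\<Sum>n\<le>K. (-1) ^ n * (psum (n + 1) * (1 - q ^ (K + 1))) * esym (K - n))"
    unfolding sum_distrib_right by (simp add: mult_ac)
  also have "\<dots> = (\<Sum>n\<le>K. (-1) ^ n * ((u * q) ^ (n + 1) + q ^ (n + 1) * psum (n + 1) * (1 - q ^ (K - n))) * esym (K - n))"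
    by (intro sum.cong refl) (simp only: atMost_iff psum_mult_split)
  also have "\<dots> = (\<Sum>n\<le>K. (-1) ^ n * (u * q) ^ (n + 1) * esym (K - n))
        + (\<Sum>n\<le>K. (-1) ^ n * q ^ (n + 1) * psum (n + 1) * ((1 - q ^ (K - n)) * esym (K - n)))"
    by (simp add: sum.distrib[symmetric] algebra_simps)
  also have "\<dots> = u * q ^ (K + 1) * esym K + u * q ^ (K + 1) * (of_nat K * esym K)"
    unfolding K_def alternating_sum_esym newton_tail_sum Suc.IH[symmetric] by simp
  also have "\<dots> = of_nat (Suc K) * (u * q ^ (K + 1) * esym K)"
    by (simp add: algebra_simps)
  also have "u * q ^ (K + 1) * esym K = esym (Suc K) * (1 - q ^ (K + 1))"
    using esym_Suc[of K] by (simp only: Suc_eq_plus1)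
  finally have "(\<Sum>n\<le>K. (-1) ^ n * psum (n + 1) * esym (K - n)) * (1 - q ^ (K + 1))
      = (of_nat (Suc K) * esym (Suc K)) * (1 - q ^ (K + 1))"
    by (simp only: mult.assoc)
  with nonzero have "(\<Sum>n\<le>K. (-1) ^ n * psum (n + 1) * esym (K - n)) = of_nat (Suc K) * esym (Suc K)"
    by (rule mult_right_cancel[THEN iffD1])
  then show ?case
    unfolding K_def by (rule sym)
qed

end

lemma fls_nth_polar: "fls_nth (polar F) m = (if m < 0 then fls_nth F m else 0)"
  by (simp add: polar_def)

definition fls_supp_nonneg :: "'a::zero fls \<Rightarrow> bool" where
  "fls_supp_nonneg F \<longleftrightarrow> (\<forall>m<0. fls_nth F m = 0)"

definition fls_supp_neg :: "'a::zero fls \<Rightarrow> bool" where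
  "fls_supp_neg F \<longleftrightarrow> (\<forall>m\<ge>0. fls_nth F m = 0)"

definition fls_supp_nonpos :: "'a::zero fls \<Rightarrow> bool" where
  "fls_supp_nonpos F \<longleftrightarrow> (\<forall>m>0. fls_nth F m = 0)"

lemma polar_diff_supp:
  assumes "fls_supp_nonneg F" and "fls_supp_neg G"
  shows "polar (F - G) = - G"
  using assms by (auto simp: fls_eq_iff fls_nth_polar fls_supp_nonneg_def fls_supp_neg_def)

lemma fls_supp_nonneg_eq_fps_to_fls: "fls_supp_nonneg F \<Longrightarrow> F = fps_to_fls (fls_regpart F)"
  by (auto simp: fls_eq_iff fls_supp_nonneg_def)

lemma fls_supp_nonneg_mult:
  fixes F G :: "'a::comm_ring_1 fls"
  assumes "fls_supp_nonneg F" and "fls_supp_nonneg G"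
  shows "fls_supp_nonneg (F * G)" and "fls_nth (F * G) 0 = fls_nth F 0 * fls_nth G 0"
proof -
  have "F * G = fps_to_fls (fls_regpart F * fls_regpart G)"
    using assms by (subst (1 2) fls_supp_nonneg_eq_fps_to_fls) (simp_all add: fls_times_fps_to_fls)
  then show "fls_supp_nonneg (F * G)" and "fls_nth (F * G) 0 = fls_nth F 0 * fls_nth G 0"
    by (simp_all add: fls_supp_nonneg_def)
qed

lemma fls_supp_nonneg_sum: "(\<And>i. i \<in> A \<Longrightarrow> fls_supp_nonneg (f i)) \<Longrightarrow> fls_supp_nonneg (\<Sum>i\<in>A. f i)"
  by (auto simp: fls_supp_nonneg_def fls_nth_sum intro!: sum.neutral)

lemma fls_supp_neg_sum: "(\<And>i. i \<in> A \<Longrightarrow> fls_supp_neg (f i)) \<Longrightarrow> fls_supp_neg (\<Sum>i\<in>A. f i)"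
  by (auto simp: fls_supp_neg_def fls_nth_sum intro!: sum.neutral)

lemma fls_supp_neg_uminus_iff [simp]:
  fixes F :: "'a::group_add fls"
  shows "fls_supp_neg (- F) \<longleftrightarrow> fls_supp_neg F"
  by (simp add: fls_supp_neg_def)

lemma fls_supp_neg_mult_simple_pole:
  fixes F :: "'a::comm_ring_1 fls"
  assumes "fls_supp_nonpos F"
  shows "fls_supp_neg (F * fls_shift 1 (fls_const c))"
  using assms by (simp add: fls_supp_nonpos_def fls_supp_neg_def fls_shifted_times_simps)

lemma fps_deriv_eq_mult_nth:
  assumes "fps_deriv X = X * Y"
  shows "of_nat (Suc m) * fps_nth X (Suc m) = (\<Sum>i=0..m. fps_nth X i * fps_nth Y (m - i))"
proof -
  have "of_nat (Suc m) * fps_nth X (Suc m) = fps_nth (fps_deriv X) m"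
    by simp
  then show ?thesis
    by (simp add: assms fps_mult_nth)
qed

lemma fps_ode_unique:
  fixes X Y H :: "'a::field_char_0 fps"
  assumes "fps_deriv X = X * H" and "fps_deriv Y = Y * H" and "fps_nth X 0 = fps_nth Y 0"
  shows "X = Y"
proof -
  have D: "fps_deriv (X - Y) = (X - Y) * H"
    using assms by (simp add: algebra_simps)
  have "fps_nth (X - Y) n = 0" for n
  proof (induction n rule: less_induct)
    case (less n)
    show ?case
    proof (cases n)
      case 0
      then show ?thesis using assms by simp
    next
      case (Suc m)
      have "of_nat (Suc m) * fps_nth (X - Y) (Suc m) = 0"
        using less Suc by (simp only: fps_deriv_eq_mult_nth[OF D]) (auto intro: sum.neutral)
      then show ?thesis
        using Suc by (simp del: of_nat_Suc)
    qed
  qed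
  then show ?thesis
    by (simp add: fps_eq_iff)
qed

lemma fps_deriv_exp_compose:
  fixes I :: "'a::field_char_0 fps"
  assumes "fps_nth I 0 = 0"
  shows "fps_deriv (fps_exp 1 oo I) = (fps_exp 1 oo I) * fps_deriv I"
  using fps_compose_deriv[OF assms, of "fps_exp 1"] by simp

lemma gbinomial_alternating_sum:
  fixes a :: "'a::field_char_0"
  shows "(\<Sum>i\<le>m. (-1) ^ (m - i) * (a gchoose i)) = (a - 1) gchoose m"
proof -
  have sign: "(-1) ^ (m - i) = (-1) ^ m * ((-1) ^ i :: 'a)" if "i \<le> m" for i
    using that by (auto simp: minus_one_power_iff)
  have "(\<Sum>i\<le>m. (-1) ^ (m - i) * (a gchoose i)) = (-1) ^ m * (\<Sum>i\<le>m. (a gchoose i) * (-1) ^ i)"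
    unfolding sum_distrib_left by (intro sum.cong refl) (simp add: sign)
  also have "\<dots> = (a - 1) gchoose m"
    by (simp add: gbinomial_sum_lower_neg)
  finally show ?thesis .
qed

lemma eq_gbinomial_if_recurrence:
  fixes c :: "nat \<Rightarrow> 'a::field_char_0"
  assumes c_0: "c 0 = 1"
    and c_Suc: "\<And>m. of_nat (Suc m) * c (Suc m) = s * (\<Sum>i\<le>m. (-1) ^ (m - i) * c i)"
  shows "c k = s gchoose k"
proof (induction k rule: less_induct)
  case (less k)
  show ?case
  proof (cases k)
    case 0
    then show ?thesis by (simp add: c_0)
  next
    case (Suc m)
    have "of_nat (Suc m) * c (Suc m) = s * (\<Sum>i\<le>m. (-1) ^ (m - i) * c i)"
      by (rule c_Suc)
    also have "(\<Sum>i\<le>m. (-1) ^ (m - i) * c i) = (\<Sum>i\<le>m. (-1) ^ (m - i) * (s gchoose i))"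
      using less Suc by (intro sum.cong) auto
    also have "(\<Sum>i\<le>m. (-1) ^ (m - i) * (s gchoose i)) = (s - 1) gchoose m"
      by (rule gbinomial_alternating_sum)
    also have "s * ((s - 1) gchoose m) = of_nat (Suc m) * (s gchoose Suc m)"
      by (rule gbinomial_absorption[symmetric])
    finally show ?thesis
      using Suc by (simp del: of_nat_Suc)
  qed
qed

lemma gbinomial_uminus_eq_prod:
  fixes a :: "'a::field_char_0"
  shows "((- a) gchoose k) = (-1) ^ k / fact k * (\<Prod>i\<in>{1..k}. a + of_nat i - 1)"
proof -
  have "pochhammer a k = (\<Prod>i\<in>{1..k}. a + of_nat i - 1)"
    by (induction k) (simp_all add: pochhammer_rec' prod.nat_ivl_Suc')
  then show ?thesis
    unfolding gbinomial_pochhammer minus_minus by simp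
qed

section \<open>Birkhoff factorisation\<close>

text \<open>\<open>a\<close> and \<open>L\<close> stand for \<open>esym\<close> and \<open>psum\<close> over Laurent series in \<open>z\<close>; \<open>Phi_plus\<close> and
  \<open>Phi_minus\<close> will be the generating series of \<open>phi_plus\<close> and \<open>phi_minus\<close>.\<close>

locale birkhoff =
  fixes a L :: "nat \<Rightarrow> complex fls" and s :: complex
  assumes a_0: "a 0 = 1"
    and newton: "\<And>k. of_nat (Suc k) * a (Suc k) = (\<Sum>n\<le>k. (-1) ^ n * L (n + 1) * a (k - n))"
    and L_simple_pole: "\<And>n m. n \<ge> 1 \<Longrightarrow> m < -1 \<Longrightarrow> fls_nth (L n) m = 0"
    and L_nth_0: "\<And>n. n \<ge> 1 \<Longrightarrow> fls_nth (L n) 0 = s"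
begin

definition G :: "complex fls fps" where
  "G = Abs_fps a"

definition H :: "complex fls fps" where
  "H = Abs_fps (\<lambda>n. fls_const ((-1) ^ n) * L (n + 1))"

definition H_pol :: "complex fls fps" where
  "H_pol = Abs_fps (\<lambda>n. polar (fps_nth H n))"

definition H_reg :: "complex fls fps" where
  "H_reg = H - H_pol"

definition Phi_plus :: "complex fls fps" where
  "Phi_plus = fps_exp 1 oo fps_integral H_reg 0"

definition Phi_minus :: "complex fls fps" where
  "Phi_minus = fps_exp 1 oo - fps_integral H_pol 0"

lemma fps_deriv_G: "fps_deriv G = G * H"
proof -
  have "fps_nth (fps_deriv G) k = fps_nth (H * G) k" for k
  proof -
    have "fps_nth (fps_deriv G) k = of_nat (Suc k) * a (Suc k)"
      by (simp add: G_def)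
    also have "\<dots> = (\<Sum>n\<le>k. (-1) ^ n * L (n + 1) * a (k - n))"
      by (rule newton)
    also have "\<dots> = fps_nth (H * G) k"
      by (simp add: fps_mult_nth G_def H_def atLeast0AtMost fls_const_power)
    finally show ?thesis .
  qed
  then show ?thesis
    by (simp add: fps_eq_iff mult.commute)
qed

lemma fps_deriv_Phi_plus: "fps_deriv Phi_plus = Phi_plus * H_reg"
  unfolding Phi_plus_def by (simp add: fps_deriv_exp_compose fps_deriv_fps_integral)

lemma fps_deriv_Phi_minus: "fps_deriv Phi_minus = Phi_minus * - H_pol"
  unfolding Phi_minus_def by (simp add: fps_deriv_exp_compose fps_deriv_fps_integral)

lemma Phi_plus_nth_0 [simp]: "fps_nth Phi_plus 0 = 1"
  by (simp add: Phi_plus_def)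

lemma Phi_minus_nth_0 [simp]: "fps_nth Phi_minus 0 = 1"
  by (simp add: Phi_minus_def)

theorem G_mult_Phi_minus: "G * Phi_minus = Phi_plus"
proof (rule fps_ode_unique)
  show "fps_deriv (G * Phi_minus) = G * Phi_minus * H_reg"
    by (simp add: fps_deriv_G fps_deriv_Phi_minus H_reg_def algebra_simps)
  show "fps_deriv Phi_plus = Phi_plus * H_reg"
    by (rule fps_deriv_Phi_plus)
  show "fps_nth (G * Phi_minus) 0 = fps_nth Phi_plus 0"
    by (simp add: G_def a_0)
qed

lemma Phi_plus_nth: "fps_nth Phi_plus k = (\<Sum>i=0..k. a i * fps_nth Phi_minus (k - i))"
  by (simp add: fps_mult_nth G_def flip: G_mult_Phi_minus)

lemma H_reg_nth: "fls_supp_nonneg (fps_nth H_reg j)" "fls_nth (fps_nth H_reg j) 0 = (-1) ^ j * s"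
  by (simp_all add: fls_supp_nonneg_def H_reg_def H_pol_def H_def fls_nth_polar L_nth_0)

lemma H_pol_nth: "fps_nth H_pol j = fls_shift 1 (fls_const ((-1) ^ j * fls_nth (L (j + 1)) (-1)))"
proof -
  have "fls_nth (fps_nth H_pol j) m = fls_nth (fls_shift 1 (fls_const ((-1) ^ j * fls_nth (L (j + 1)) (-1)))) m" for m
    by (cases "m < -1"; cases "m = -1") (auto simp: H_pol_def H_def fls_nth_polar L_simple_pole)
  then show ?thesis
    by (simp add: fls_eq_iff)
qed

lemma Phi_plus_nth_supp_nonneg: "fls_supp_nonneg (fps_nth Phi_plus k)"
proof (induction k rule: less_induct)
  case (less k)
  show ?case
  proof (cases k)
    case 0
    then show ?thesis by (simp add: fls_supp_nonneg_def)
  next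
    case (Suc m)
    have "fls_supp_nonneg (\<Sum>i=0..m. fps_nth Phi_plus i * fps_nth H_reg (m - i))"
      using less Suc by (intro fls_supp_nonneg_sum fls_supp_nonneg_mult H_reg_nth) auto
    then have "fls_supp_nonneg (of_nat (Suc m) * fps_nth Phi_plus (Suc m))"
      by (simp only: fps_deriv_eq_mult_nth[OF fps_deriv_Phi_plus])
    then show ?thesis
      using Suc by (simp add: fls_supp_nonneg_def del: of_nat_Suc)
  qed
qed

lemma Phi_minus_nth_supp_neg: "k \<ge> 1 \<Longrightarrow> fls_supp_neg (fps_nth Phi_minus k)"
proof (induction k rule: less_induct)
  case (less k)
  then obtain m where Suc: "k = Suc m"
    by (cases k) auto
  have nonpos: "fls_supp_nonpos (fps_nth Phi_minus i)" if "i \<le> m" for i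
    using less.IH[of i] that Suc by (cases i) (auto simp: fls_supp_nonpos_def fls_supp_neg_def)
  have "fls_supp_neg (\<Sum>i=0..m. fps_nth Phi_minus i * fps_nth (- H_pol) (m - i))"
    using nonpos by (auto simp: H_pol_nth intro!: fls_supp_neg_sum fls_supp_neg_mult_simple_pole)
  then have "fls_supp_neg (of_nat (Suc m) * fps_nth Phi_minus (Suc m))"
    by (simp only: fps_deriv_eq_mult_nth[OF fps_deriv_Phi_minus])
  then show ?case
    using Suc by (simp add: fls_supp_neg_def del: of_nat_Suc)
qed

lemma Phi_plus_coeff_const: "fls_nth (fps_nth Phi_plus k) 0 = s gchoose k"
proof (rule eq_gbinomial_if_recurrence)
  show "fls_nth (fps_nth Phi_plus 0) 0 = 1"
    by simp
  fix m
  have "of_nat (Suc m) * fls_nth (fps_nth Phi_plus (Suc m)) 0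
      = fls_nth (of_nat (Suc m) * fps_nth Phi_plus (Suc m)) 0"
    by (simp del: of_nat_Suc)
  also have "of_nat (Suc m) * fps_nth Phi_plus (Suc m) = (\<Sum>i=0..m. fps_nth Phi_plus i * fps_nth H_reg (m - i))"
    by (rule fps_deriv_eq_mult_nth[OF fps_deriv_Phi_plus])
  also have "fls_nth \<dots> 0 = (\<Sum>i=0..m. fls_nth (fps_nth Phi_plus i) 0 * ((-1) ^ (m - i) * s))"
    by (simp add: fls_nth_sum fls_supp_nonneg_mult(2) Phi_plus_nth_supp_nonneg H_reg_nth)
  finally show "of_nat (Suc m) * fls_nth (fps_nth Phi_plus (Suc m)) 0
      = s * (\<Sum>i\<le>m. (-1) ^ (m - i) * fls_nth (fps_nth Phi_plus i) 0)"
    by (simp add: sum_distrib_left atLeast0AtMost mult_ac)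
qed

end

lemma phi_minus_eq_uminus_polar_E_series: "\<beta> \<noteq> [] \<Longrightarrow> phi_minus t \<beta> = - polar (E_series t \<beta>)"
  by (subst phi_minus.simps) (simp add: E_series_def)

declare phi_minus.simps [simp del]

locale replicated_letter =
  fixes \<delta> :: nat and t :: real
  assumes \<delta>_pos: "\<delta> \<ge> 1"
begin

sublocale geometric_alphabet "exp_fls (of_nat \<delta>)" "exp_fls (of_real t * of_nat \<delta>)"
proof
  fix m :: nat assume "m \<ge> 1"
  then have "fls_nth (exp_fls (of_nat \<delta>) ^ m) 1 \<noteq> fls_nth 1 1"
    using \<delta>_pos by (simp add: exp_fls_power fls_nth_exp_fls_1)
  then show "exp_fls (of_nat \<delta>) ^ m \<noteq> 1"
    by metis
qed

lemma phi_replicate: "phi t (replicate k \<delta>) = esym k"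
proof (rule phi_eqI)
  show "(\<lambda>z. \<Prod>j\<in>{1..k}. exp (of_real t * of_nat \<delta> * z) * exp (of_nat \<delta> * z) ^ j / (1 - exp (of_nat \<delta> * z) ^ j))
      has_laurent_expansion esym k"
    unfolding esym_def by (intro laurent_expansion_intros)
  show "phi_fun t (replicate k \<delta>) z =
      (\<Prod>j\<in>{1..k}. exp (of_real t * of_nat \<delta> * z) * exp (of_nat \<delta> * z) ^ j / (1 - exp (of_nat \<delta> * z) ^ j))"
    if "Re z < 0" for z
    using phi_fun_replicate[OF that \<delta>_pos] .
qed

lemma psum_eq: "psum n = exp_fls (of_nat n * (of_real t * of_nat \<delta>) + of_nat n * of_nat \<delta>)
    / (1 - exp_fls (of_nat n * of_nat \<delta>))"
  by (simp only: psum_def exp_fls_power exp_fls_add)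

sublocale birkhoff esym psum "- (complex_of_real t + 1/2)"
proof
  show "esym 0 = 1"
    by simp
  show "of_nat (Suc k) * esym (Suc k) = (\<Sum>n\<le>k. (-1) ^ n * psum (n + 1) * esym (k - n))" for k
    by (rule newton_identity)
  fix n :: nat assume "n \<ge> 1"
  then have c: "of_nat n * of_nat \<delta> \<noteq> (0::complex)"
    using \<delta>_pos by simp
  show "fls_nth (psum n) m = 0" if "m < -1" for m
    unfolding psum_eq using fls_nth_exp_fls_div_one_minus_exp_fls(1)[OF c that] .
  have "fls_nth (psum n) 0 = 1/2 - (of_nat n * (of_real t * of_nat \<delta>) + of_nat n * of_nat \<delta>) / (of_nat n * of_nat \<delta>)"
    unfolding psum_eq by (rule fls_nth_exp_fls_div_one_minus_exp_fls(2)[OF c])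
  also have "\<dots> = - (complex_of_real t + 1/2)"
    using c by (simp add: field_simps)
  finally show "fls_nth (psum n) 0 = - (complex_of_real t + 1/2)" .
qed

lemma E_series_replicate:
  assumes "k \<ge> 1" and "\<And>j. 1 \<le> j \<Longrightarrow> j < k \<Longrightarrow> phi_minus t (replicate j \<delta>) = fps_nth Phi_minus j"
  shows "E_series t (replicate k \<delta>) = fps_nth Phi_plus k - fps_nth Phi_minus k"
proof -
  have "E_series t (replicate k \<delta>) = esym k + (\<Sum>i\<in>{1..<k}. esym i * fps_nth Phi_minus (k - i))"
    unfolding E_series_def length_replicate phi_replicate
    using assms(2) by (intro arg_cong2[where f = "(+)"] sum.cong) (auto simp: phi_replicate min_def)
  also have "\<dots> = (\<Sum>i=0..k. esym i * fps_nth Phi_minus (k - i)) - fps_nth Phi_minus k"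
  proof -
    have "{0..k} = insert 0 (insert k {1..<k})"
      using assms(1) by auto
    then show ?thesis
      using assms(1) by simp
  qed
  also have "\<dots> = fps_nth Phi_plus k - fps_nth Phi_minus k"
    by (simp add: Phi_plus_nth)
  finally show ?thesis .
qed

lemma phi_minus_replicate: "k \<ge> 1 \<Longrightarrow> phi_minus t (replicate k \<delta>) = fps_nth Phi_minus k"
proof (induction k rule: less_induct)
  case (less k)
  then have "E_series t (replicate k \<delta>) = fps_nth Phi_plus k - fps_nth Phi_minus k"
    by (intro E_series_replicate) auto
  then show ?case
    using less.prems
    by (simp add: phi_minus_eq_uminus_polar_E_series polar_diff_supp Phi_plus_nth_supp_nonneg Phi_minus_nth_supp_neg)
qed

lemma phi_plus_replicate:
  assumes "k \<ge> 1"
  shows "phi_plus t (replicate k \<delta>) = fps_nth Phi_plus k"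
proof -
  have "E_series t (replicate k \<delta>) = fps_nth Phi_plus k - fps_nth Phi_minus k"
    using assms by (intro E_series_replicate phi_minus_replicate) auto
  then show ?thesis
    using assms by (simp add: phi_plus_def polar_diff_supp Phi_plus_nth_supp_nonneg Phi_minus_nth_supp_neg)
qed

lemma M0k_eq_gbinomial: "k \<ge> 1 \<Longrightarrow> M0k \<delta> k t = (- (complex_of_real t + 1/2)) gchoose k"
  by (simp add: M0k_def Zren_def phi_plus_replicate Phi_plus_coeff_const)

end

theorem lemma5p9:
  fixes k \<delta> :: nat and t :: real
  assumes "k \<ge> 1" and "\<delta> \<ge> 1" and "t \<ge> 0"
  shows "M0k \<delta> k t = (\<Prod>i<k. (M0k \<delta> 1 t - of_nat i)) / of_nat (fact k)
       \<and> M0k \<delta> k t = ((-1) ^ k / of_nat (fact k)) *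
            (\<Prod>i\<in>{1..k}. complex_of_real (t + real i - 1/2))"
proof -
  interpret replicated_letter \<delta> t
    using \<open>\<delta> \<ge> 1\<close> by unfold_locales
  define s where "s = - (complex_of_real t + 1/2)"
  have M_k: "M0k \<delta> k t = s gchoose k" and M_1: "M0k \<delta> 1 t = s"
    using M0k_eq_gbinomial[OF \<open>k \<ge> 1\<close>] M0k_eq_gbinomial[of 1] by (simp_all add: s_def)
  have "s gchoose k = (\<Prod>i<k. s - of_nat i) / of_nat (fact k)"
    by (simp add: gbinomial_prod_rev atLeast0LessThan)
  moreover have "s gchoose k = (-1) ^ k / of_nat (fact k) * (\<Prod>i\<in>{1..k}. complex_of_real (t + real i - 1/2))"
    using gbinomial_uminus_eq_prod[of "complex_of_real t + 1/2" k] by (simp add: s_def algebra_simps)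
  ultimately show ?thesis
    using M_k M_1 by simp
qed

end
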